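(* Let $a<b$, $n\in\mathbb{N}$, and let $X_n=\{x_0,\dots,x_n\}$ with $a=x_0<x_1<\dots<x_n=b$. Let $S=\{s_1,\dots,s_m\}\subset(a,b)$ be such that $s_\ell\in(x_{\alpha_\ell},x_{\alpha_\ell+1})$ for integers $0<\alpha_1<\dots<\alpha_m<n-1$ satisfying $\alpha_\ell+1<\alpha_{\ell+1}$ for $\ell=1,\dots,m-1$. Define $$I_0=[x_0,x_{\alpha_1}],\qquad I_\ell=[x_{\alpha_\ell+1},x_{\alpha_{\ell+1}}]\ (\ell=1,\dots,m-1),\qquad I_m=[x_{\alpha_m+1},x_n],$$ $h^{\min}=\min_{\ell}|I_\ell|$, and $$h^{\max}_{X_n}=\max\{\,x_{i+1}-x_i:\ 0\le i\le n-1,\ s_\ell\notin(x_i,x_{i+1})\ \forall \ell\,\}.$$ Assume $h^{\min}\ge h^{\max}_{X_n}$. For $r>0$ and $x\in[a,b]$ let $\mathcal{I}_{r,x}$ be the set of closed intervals $I\subset\bigcup_{\ell=0}^m I_\ell$ with $|I|=r$ and $x\in I$, and let $$r_0=\inf\Big\{r\in\mathbb{R}_+:\ r\le h^{\min}\ \text{and}\ \forall x\in\textstyle\bigcup_{\ell=0}^m I_\ell\ \exists I\in\mathcal{I}_{r,x}\ \text{with}\ \mathrm{card}(I\cap X_n)\ge 1\Big\}.$$ Then for every $\ell=0,\dots,m$ there exist closed intervals $U_{\ell,1},\dots,U_{\ell,n_\ell}$ such that $|U_{\ell,j}|=r_0$ and $\mathrm{card}(U_{\ell,j}\cap X_n)\ge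 1$ for all $j=1,\dots,n_\ell$, $U_{\ell,j}\cap U_{\ell,j+1}\neq\emptyset$ for all $j=1,\dots,n_\ell-1$, and $I_\ell=\bigcup_{j=1}^{n_\ell}U_{\ell,j}$.
   Context: $\mathbb{R}_+$ denotes the positive reals; $\mathrm{card}$ denotes cardinality and $|I|$ the length of an interval $I$. *)

theory Defs
  imports Complex_Main
begin

definition closed_interval_len :: "real set \<Rightarrow> real \<Rightarrow> bool" where
  "closed_interval_len I r \<longleftrightarrow> (\<exists>c d. c \<le> d \<and> I = {c..d} \<and> d - c = r)"

definition Ileft :: "(nat \<Rightarrow> real) \<Rightarrow> (nat \<Rightarrow> nat) \<Rightarrow> nat \<Rightarrow> real" where
  "Ileft x \<alpha> l = (if l = 0 then x 0 else x (\<alpha> l + 1))"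

definition Iright :: "(nat \<Rightarrow> real) \<Rightarrow> (nat \<Rightarrow> nat) \<Rightarrow> nat \<Rightarrow> nat \<Rightarrow> nat \<Rightarrow> real" where
  "Iright x \<alpha> n m l = (if l < m then x (\<alpha> (l + 1)) else x n)"

end

theory Submission
  imports Defs
begin

(*
  Every grid cell inside a piece I_l avoids the points s_k, so its length is at most
  h_max <= h_min.  Hence h_min is itself an admissible radius, and r_0 <= h_min.  Conversely,
  an admissible interval around the midpoint of a cell must reach a grid point, which lies
  outside the open cell, so each cell of a piece is at most 2 r_0 long.  A piece [x_p, x_q]
  is then covered by the chain of intervals of length r_0 that start, respectively end, at
  the successive grid points, shifted into the piece where necessary.
*)

lemma grid_le:
  fixes x :: "nat \<Rightarrow> 'a::order"
  assumes "\<And>k. k < n \<Longrightarrow> x k < x (Suc k)" "i \<le> j" "j \<le> n"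
  shows "x i \<le> x j"
  using lift_Suc_mono_le_ivl[of "{..<n}" x i j] assms by (simp add: less_imp_le subset_eq)

lemma grid_mono_on:
  fixes x :: "nat \<Rightarrow> 'a::order"
  assumes "\<And>k. p \<le> k \<Longrightarrow> k < q \<Longrightarrow> x k \<le> x (Suc k)" "p \<le> i" "i \<le> j" "j \<le> q"
  shows "x i \<le> x j"
  using lift_Suc_mono_le_ivl[of "{p..<q}" x i j] assms by (simp add: subset_eq)

lemma grid_less:
  fixes x :: "nat \<Rightarrow> 'a::order"
  assumes "\<And>k. k < n \<Longrightarrow> x k < x (Suc k)" "i < j" "j \<le> n"
  shows "x i < x j"
  using lift_Suc_mono_less_ivl[of "{..<n}" x i j] assms by (simp add: subset_eq)

lemma grid_points_notin_open_cell:
  fixes x :: "nat \<Rightarrow> 'a::linorder"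
  assumes "\<And>k. k < n \<Longrightarrow> x k < x (Suc k)" "i < n"
  shows "x ` {0..n} \<inter> {x i<..<x (Suc i)} = {}"
proof -
  have "x k \<le> x i \<or> x (Suc i) \<le> x k" if "k \<le> n" for k
    using grid_le[of n x k i] grid_le[of n x "Suc i" k] that assms
    by (cases "k \<le> i") auto
  then show ?thesis by fastforce
qed

lemma grid_open_cells_disjoint:
  fixes x :: "nat \<Rightarrow> 'a::linorder"
  assumes "\<And>k. k < n \<Longrightarrow> x k < x (Suc k)" "i < n" "j < n" "i \<noteq> j"
  shows "{x i<..<x (Suc i)} \<inter> {x j<..<x (Suc j)} = {}"
proof -
  have "x (Suc i) \<le> x j \<or> x (Suc j) \<le> x i"
    using grid_le[of n x "Suc i" j] grid_le[of n x "Suc j" i] assms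
    by (cases "i < j") auto
  then show ?thesis by auto
qed

lemma grid_cell_containing:
  fixes x :: "nat \<Rightarrow> 'a::linorder"
  assumes "p < q" "x p \<le> y" "y \<le> x q"
  shows "\<exists>k. p \<le> k \<and> k < q \<and> x k \<le> y \<and> y \<le> x (Suc k)"
  using assms
proof (induction q)
  case 0
  then show ?case by simp
next
  case (Suc q)
  show ?case
  proof (cases "p < q \<and> y \<le> x q")
    case True
    then show ?thesis using Suc by (meson less_SucI)
  next
    case False
    then have "x q \<le> y" using Suc.prems by (metis less_Suc_eq linorder_le_cases)
    then show ?thesis using Suc.prems by (intro exI[of _ q]) auto
  qed
qed

definition clamped_interval :: "real \<Rightarrow> real \<Rightarrow> real \<Rightarrow> real \<Rightarrow> real set" where
  "clamped_interval lo hi r c = {max lo (min c (hi - r)) .. max lo (min c (hi - r)) + r}"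

lemma closed_interval_len_clamped_interval:
  "0 \<le> r \<Longrightarrow> closed_interval_len (clamped_interval lo hi r c) r"
  unfolding closed_interval_len_def clamped_interval_def by auto

lemma clamped_interval_subset:
  "r \<le> hi - lo \<Longrightarrow> clamped_interval lo hi r c \<subseteq> {lo..hi}"
  unfolding clamped_interval_def by (auto simp: subset_iff split: split_min split_max)

lemma short_cell_subset_clamped_interval:
  assumes "lo \<le> c" "d \<le> hi" "d - c \<le> r"
  shows "{c..d} \<subseteq> clamped_interval lo hi r c"
  using assms unfolding clamped_interval_def by (auto simp: subset_iff split: split_min split_max)

lemma start_mem_clamped_interval:
  assumes "lo \<le> c" "c \<le> hi" "0 \<le> r"
  shows "c \<in> clamped_interval lo hi r c"
  using assms unfolding clamped_interval_def by (simp split: split_min split_max)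

lemma end_mem_clamped_interval:
  assumes "lo \<le> d" "d \<le> hi" "0 \<le> r"
  shows "d \<in> clamped_interval lo hi r (d - r)"
  using assms unfolding clamped_interval_def by (simp split: split_min split_max)

lemma cell_subset_clamped_intervals:
  assumes "lo \<le> c" "d \<le> hi" "d - c \<le> 2 * r" "r \<le> hi - lo"
  shows "{c..d} \<subseteq> clamped_interval lo hi r c \<union> clamped_interval lo hi r (d - r)"
  using assms unfolding clamped_interval_def by (auto simp: subset_iff split: split_min split_max)

lemma clamped_intervals_overlap:
  assumes "lo \<le> c" "c \<le> d" "d \<le> hi" "d - c \<le> 2 * r" "r \<le> hi - lo"
  shows "clamped_interval lo hi r c \<inter> clamped_interval lo hi r (d - r) \<noteq> {}"
proof -
  have "max (max lo (min c (hi - r))) (max lo (min (d - r) (hi - r)))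
          \<in> clamped_interval lo hi r c \<inter> clamped_interval lo hi r (d - r)"
    using assms unfolding clamped_interval_def by (simp split: split_min split_max)
  then show ?thesis by blast
qed

lemma chain_cover_of_grid_interval:
  fixes x :: "nat \<Rightarrow> real"
  assumes "p < q" "0 \<le> r" "r \<le> x q - x p"
    and step: "\<And>k. p \<le> k \<Longrightarrow> k < q \<Longrightarrow> x k \<le> x (Suc k) \<and> x (Suc k) - x k \<le> 2 * r"
  shows "\<exists>(nl::nat) U. (\<forall>j\<in>{1..nl}. closed_interval_len (U j) r \<and> U j \<inter> x ` {p..q} \<noteq> {}) \<and>
           (\<forall>j\<in>{1..<nl}. U j \<inter> U (j + 1) \<noteq> {}) \<and> {x p..x q} = (\<Union>j\<in>{1..nl}. U j)"
proof -
  have mono: "x i \<le> x j" if "p \<le> i" "i \<le> j" "j \<le> q" for i j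
    using grid_mono_on[of p q x i j] step that by blast
  let ?C = "clamped_interval (x p) (x q) r"
  \<comment> \<open>A cell of length at most 2r is covered by the interval starting at its left end point
    and the one ending at its right end point.\<close>
  define U where "U j = (if odd j then ?C (x (p + j div 2)) else ?C (x (p + j div 2) - r))" for j
  define nl where "nl = 2 * (q - p)"
  have U_odd: "U (2 * t + 1) = ?C (x (p + t))" and U_even: "U (2 * t + 2) = ?C (x (p + t + 1) - r)"
    for t by (simp_all add: U_def)
  have grid_point_mem: "p + j div 2 \<le> q \<and> x (p + j div 2) \<in> U j" if "j \<in> {1..nl}" for j
  proof -
    have "p + j div 2 \<le> q" using that by (auto simp: nl_def)
    then show ?thesis
      using mono[of p "p + j div 2"] mono[of "p + j div 2" q] assms(2)
      by (auto simp: U_def intro: start_mem_clamped_interval end_mem_clamped_interval)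
  qed
  have "closed_interval_len (U j) r \<and> U j \<inter> x ` {p..q} \<noteq> {}" if "j \<in> {1..nl}" for j
    using grid_point_mem[OF that] assms(2) by (auto simp: U_def closed_interval_len_clamped_interval)
  moreover have "U j \<inter> U (j + 1) \<noteq> {}" if "j \<in> {1..<nl}" for j
  proof (cases "odd j")
    case True
    then obtain t where t: "j = 2 * t + 1" by (metis oddE)
    then have "p + t < q" using that by (auto simp: nl_def)
    then show ?thesis
      using t U_odd[of t] U_even[of t] clamped_intervals_overlap assms(3) step[of "p + t"]
        mono[of p "p + t"] mono[of "Suc (p + t)" q] by auto
  next
    case False
    then have "(j + 1) div 2 = j div 2" by presburger
    then show ?thesis using grid_point_mem[of j] grid_point_mem[of "j + 1"] that by auto
  qed
  moreover have "{x p..x q} \<subseteq> (\<Union>j\<in>{1..nl}. U j)"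
  proof
    fix y assume "y \<in> {x p..x q}"
    then obtain k where k: "p \<le> k" "k < q" "x k \<le> y" "y \<le> x (Suc k)"
      using grid_cell_containing[OF assms(1)] by auto
    define t where "t = k - p"
    have "y \<in> U (2 * t + 1) \<union> U (2 * t + 2)"
      using U_odd[of t] U_even[of t] cell_subset_clamped_intervals[of "x p" "x k" "x (Suc k)" "x q" r]
        step[of k] assms(3) k mono[of p k] mono[of "Suc k" q] by (auto simp: t_def)
    moreover have "2 * t + 1 \<in> {1..nl}" "2 * t + 2 \<in> {1..nl}" using k by (auto simp: t_def nl_def)
    ultimately show "y \<in> (\<Union>j\<in>{1..nl}. U j)" by blast
  qed
  moreover have "U j \<subseteq> {x p..x q}" for j
    using assms(3) by (simp add: U_def clamped_interval_subset)
  ultimately show ?thesis by (intro exI[of _ nl] exI[of _ U]) blast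
qed

definition admissible_radii :: "real set \<Rightarrow> real set \<Rightarrow> real \<Rightarrow> real set" where
  "admissible_radii D X h = {r. r > 0 \<and> r \<le> h \<and>
     (\<forall>y\<in>D. \<exists>J. closed_interval_len J r \<and> J \<subseteq> D \<and> y \<in> J \<and> card (J \<inter> X) \<ge> 1)}"

lemma Inf_admissible_radii_le:
  "h \<in> admissible_radii D X h \<Longrightarrow> Inf (admissible_radii D X h) \<le> h"
  by (rule cInf_lower) (auto simp: admissible_radii_def bdd_below_def intro: less_imp_le)

lemma gap_le_twice_admissible_radius:
  assumes "r \<in> admissible_radii D X h" "u \<le> v" "{u..v} \<subseteq> D" "X \<inter> {u<..<v} = {}"
  shows "v - u \<le> 2 * r"
proof -
  have "(u + v) / 2 \<in> D" using assms(2,3) by auto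
  then obtain J where J: "closed_interval_len J r" "(u + v) / 2 \<in> J" "card (J \<inter> X) \<ge> 1"
    using assms(1) unfolding admissible_radii_def by blast
  obtain c d where cd: "J = {c..d}" "d - c = r" using J(1) unfolding closed_interval_len_def by blast
  obtain z where "z \<in> J" "z \<in> X" using J(3) by (metis card.empty disjoint_iff not_one_le_zero)
  then have "z \<le> u \<or> v \<le> z" using assms(4) by auto
  then show ?thesis using \<open>z \<in> J\<close> J(2) cd by auto
qed

lemma gap_le_twice_Inf_admissible_radii:
  assumes "admissible_radii D X h \<noteq> {}" "u \<le> v" "{u..v} \<subseteq> D" "X \<inter> {u<..<v} = {}"
  shows "v - u \<le> 2 * Inf (admissible_radii D X h)"
proof -
  have "(v - u) / 2 \<le> Inf (admissible_radii D X h)"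
    using gap_le_twice_admissible_radius[OF _ assms(2-4)] by (intro cInf_greatest[OF assms(1)]) force
  then show ?thesis by simp
qed

lemma top_mem_admissible_radii:
  fixes x :: "nat \<Rightarrow> real" and p q :: "'i \<Rightarrow> nat"
  assumes "0 < h" "finite X"
    and piece: "\<And>l. l \<in> L \<Longrightarrow> p l < q l \<and> x ` {p l..q l} \<subseteq> X \<and> h \<le> x (q l) - x (p l)"
    and cell: "\<And>l k. l \<in> L \<Longrightarrow> p l \<le> k \<Longrightarrow> k < q l \<Longrightarrow> x k \<le> x (Suc k) \<and> x (Suc k) - x k \<le> h"
  shows "h \<in> admissible_radii (\<Union>l\<in>L. {x (p l)..x (q l)}) X h"
proof -
  have "\<exists>J. closed_interval_len J h \<and> J \<subseteq> (\<Union>l\<in>L. {x (p l)..x (q l)}) \<and> y \<in> J \<and> card (J \<inter> X) \<ge> 1"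
    if l: "l \<in> L" and y: "y \<in> {x (p l)..x (q l)}" for l y
  proof -
    obtain k where k: "p l \<le> k" "k < q l" "x k \<le> y" "y \<le> x (Suc k)"
      using grid_cell_containing[of "p l" "q l" x y] piece[OF l] y by auto
    have mono: "x (p l) \<le> x k" "x (Suc k) \<le> x (q l)"
      using grid_mono_on[of "p l" "q l" x] cell[OF l] k by auto
    define J where "J = clamped_interval (x (p l)) (x (q l)) h (x k)"
    have "closed_interval_len J h"
      unfolding J_def using assms(1) by (simp add: closed_interval_len_clamped_interval)
    moreover have "J \<subseteq> (\<Union>l\<in>L. {x (p l)..x (q l)})"
      using clamped_interval_subset[of h "x (q l)" "x (p l)"] piece[OF l] l unfolding J_def by blast
    moreover have "{x k..x (Suc k)} \<subseteq> J"
      unfolding J_def using mono cell[OF l k(1,2)] by (intro short_cell_subset_clamped_interval) auto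
    moreover have "x k \<in> J \<inter> X"
      using \<open>{x k..x (Suc k)} \<subseteq> J\<close> piece[OF l] k cell[OF l k(1,2)] by auto
    ultimately show ?thesis
      using k assms(2) by (intro exI[of _ J]) (auto simp: Suc_le_eq card_gt_0_iff)
  qed
  then show ?thesis using assms(1) unfolding admissible_radii_def by blast
qed

theorem chain_cover_at_Inf_admissible_radii:
  fixes x :: "nat \<Rightarrow> real" and p q :: "'i \<Rightarrow> nat" and L :: "'i set"
  defines "D \<equiv> \<Union>l\<in>L. {x (p l)..x (q l)}"
  assumes step: "\<And>i. i < n \<Longrightarrow> x i < x (Suc i)"
    and X: "X = x ` {0..n}"
    and piece: "\<And>l. l \<in> L \<Longrightarrow> p l < q l \<and> q l \<le> n \<and> h \<le> x (q l) - x (p l)"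
    and "0 < h"
    and cell: "\<And>l i. l \<in> L \<Longrightarrow> p l \<le> i \<Longrightarrow> i < q l \<Longrightarrow> x (Suc i) - x i \<le> h"
    and l: "l \<in> L"
  shows "\<exists>(nl::nat) U.
           (\<forall>j\<in>{1..nl}. closed_interval_len (U j) (Inf (admissible_radii D X h)) \<and> card (U j \<inter> X) \<ge> 1) \<and>
           (\<forall>j\<in>{1..<nl}. U j \<inter> U (j + 1) \<noteq> {}) \<and>
           {x (p l)..x (q l)} = (\<Union>j\<in>{1..nl}. U j)"
proof -
  define r0 where "r0 = Inf (admissible_radii D X h)"
  have "finite X" using X by simp
  have piece_X: "x ` {p l..q l} \<subseteq> X" if "l \<in> L" for l
    using piece[OF that] X by auto
  have cell_mono: "x i \<le> x (Suc i)" if "l \<in> L" "p l \<le> i" "i < q l" for l i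
    using step[of i] piece[OF that(1)] that(3) by simp
  have "h \<in> admissible_radii D X h"
    unfolding D_def using \<open>0 < h\<close> \<open>finite X\<close> piece piece_X cell cell_mono
    by (intro top_mem_admissible_radii) auto
  then have "r0 \<le> h" unfolding r0_def by (rule Inf_admissible_radii_le)
  have cell_r0: "x (Suc i) - x i \<le> 2 * r0" if "p l \<le> i" "i < q l" for i
  proof -
    have "{x i..x (Suc i)} \<subseteq> D"
      using grid_le[of n x "p l" i] grid_le[of n x "Suc i" "q l"] step piece[OF l] that l
      unfolding D_def by fastforce
    moreover have "X \<inter> {x i<..<x (Suc i)} = {}"
      using grid_points_notin_open_cell[of n x i] step piece[OF l] that X by simp
    ultimately show ?thesis
      unfolding r0_def using \<open>h \<in> admissible_radii D X h\<close> step[of i] piece[OF l] that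
      by (intro gap_le_twice_Inf_admissible_radii) auto
  qed
  have "0 \<le> r0" using cell_r0[of "p l"] step[of "p l"] piece[OF l] by simp
  have "\<exists>(nl::nat) U. (\<forall>j\<in>{1..nl}. closed_interval_len (U j) r0 \<and> U j \<inter> x ` {p l..q l} \<noteq> {}) \<and>
      (\<forall>j\<in>{1..<nl}. U j \<inter> U (j + 1) \<noteq> {}) \<and> {x (p l)..x (q l)} = (\<Union>j\<in>{1..nl}. U j)"
    using piece[OF l] \<open>0 \<le> r0\<close> \<open>r0 \<le> h\<close> cell_r0 cell_mono[OF l]
    by (intro chain_cover_of_grid_interval) auto
  then obtain nl :: nat and U where
    U: "\<forall>j\<in>{1..nl}. closed_interval_len (U j) r0 \<and> U j \<inter> x ` {p l..q l} \<noteq> {}"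
      "\<forall>j\<in>{1..<nl}. U j \<inter> U (j + 1) \<noteq> {}" "{x (p l)..x (q l)} = (\<Union>j\<in>{1..nl}. U j)"
    by blast
  have "card (U j \<inter> X) \<ge> 1" if "j \<in> {1..nl}" for j
  proof -
    have "U j \<inter> X \<noteq> {}" using U(1) that piece_X[OF l] by blast
    then show ?thesis using \<open>finite X\<close> by (simp add: Suc_le_eq card_gt_0_iff)
  qed
  then show ?thesis using U unfolding r0_def by blast
qed

definition Ileft_index :: "(nat \<Rightarrow> nat) \<Rightarrow> nat \<Rightarrow> nat" where
  "Ileft_index \<alpha> l = (if l = 0 then 0 else \<alpha> l + 1)"

definition Iright_index :: "(nat \<Rightarrow> nat) \<Rightarrow> nat \<Rightarrow> nat \<Rightarrow> nat \<Rightarrow> nat" where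
  "Iright_index \<alpha> n m l = (if l < m then \<alpha> (l + 1) else n)"

lemma Ileft_eq: "Ileft x \<alpha> l = x (Ileft_index \<alpha> l)"
  by (simp add: Ileft_def Ileft_index_def)

lemma Iright_eq: "Iright x \<alpha> n m l = x (Iright_index \<alpha> n m l)"
  by (simp add: Iright_def Iright_index_def)

lemma alpha_mono:
  fixes \<alpha> :: "nat \<Rightarrow> nat"
  assumes gap: "\<And>l. l \<in> {1..<m} \<Longrightarrow> \<alpha> l + 1 < \<alpha> (l + 1)" and "1 \<le> j" "j \<le> k" "k \<le> m"
  shows "\<alpha> j \<le> \<alpha> k"
proof (rule grid_mono_on[of j m \<alpha>])
  show "\<alpha> i \<le> \<alpha> (Suc i)" if "j \<le> i" "i < m" for i
    using gap[of i] that assms(2) by simp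
qed (use assms in auto)

lemma Ileft_index_less_Iright_index:
  assumes bounds: "\<And>l. l \<in> {1..m} \<Longrightarrow> 0 < \<alpha> l \<and> \<alpha> l < n - 1"
    and gap: "\<And>l. l \<in> {1..<m} \<Longrightarrow> \<alpha> l + 1 < \<alpha> (l + 1)"
    and "0 < n" "l \<le> m"
  shows "Ileft_index \<alpha> l < Iright_index \<alpha> n m l \<and> Iright_index \<alpha> n m l \<le> n"
proof (cases "l = 0")
  case True
  then show ?thesis
    using \<open>0 < n\<close> bounds[of 1] by (cases "m = 0") (auto simp: Ileft_index_def Iright_index_def)
next
  case False
  then show ?thesis
    using \<open>l \<le> m\<close> bounds[of l] bounds[of "l + 1"] gap[of l]
    by (cases "l < m") (auto simp: Ileft_index_def Iright_index_def)
qed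

lemma piece_index_ne_alpha:
  assumes gap: "\<And>l. l \<in> {1..<m} \<Longrightarrow> \<alpha> l + 1 < \<alpha> (l + 1)"
    and "l \<le> m" "Ileft_index \<alpha> l \<le> i" "i < Iright_index \<alpha> n m l" "k \<in> {1..m}"
  shows "i \<noteq> \<alpha> k"
proof (cases "k \<le> l")
  case True
  then have "\<alpha> k \<le> \<alpha> l" "\<alpha> l + 1 \<le> i"
    using alpha_mono[of m \<alpha> k l] gap assms(2,3,5) by (auto simp: Ileft_index_def split: if_splits)
  then show ?thesis by simp
next
  case False
  then have "\<alpha> (l + 1) \<le> \<alpha> k" "i < \<alpha> (l + 1)"
    using alpha_mono[of m \<alpha> "l + 1" k] gap assms(4,5) by (auto simp: Iright_index_def)
  then show ?thesis by simp
qed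

lemma singularities_notin_piece_cells:
  fixes x s :: "nat \<Rightarrow> real" and \<alpha> :: "nat \<Rightarrow> nat"
  assumes step: "\<And>i. i < n \<Longrightarrow> x i < x (Suc i)"
    and bounds: "\<And>l. l \<in> {1..m} \<Longrightarrow> 0 < \<alpha> l \<and> \<alpha> l < n - 1"
    and gap: "\<And>l. l \<in> {1..<m} \<Longrightarrow> \<alpha> l + 1 < \<alpha> (l + 1)"
    and sing: "\<And>l. l \<in> {1..m} \<Longrightarrow> s l \<in> {x (\<alpha> l)<..<x (\<alpha> l + 1)}"
    and "l \<le> m" "Ileft_index \<alpha> l \<le> i" "i < Iright_index \<alpha> n m l" "i < n" "k \<in> {1..m}"
  shows "s k \<notin> {x i<..<x (i + 1)}"
proof -
  have "i \<noteq> \<alpha> k" using piece_index_ne_alpha[of m \<alpha> l i n k] gap assms(5-9) by blast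
  moreover have "\<alpha> k < n" using bounds[OF \<open>k \<in> {1..m}\<close>] by linarith
  ultimately have "{x i<..<x (i + 1)} \<inter> {x (\<alpha> k)<..<x (\<alpha> k + 1)} = {}"
    using grid_open_cells_disjoint[of n x i "\<alpha> k"] step \<open>i < n\<close> by simp
  then show ?thesis using sing[OF \<open>k \<in> {1..m}\<close>] by blast
qed

theorem theorem2:
  fixes a b :: real and n m :: nat and x s :: "nat \<Rightarrow> real" and \<alpha> :: "nat \<Rightarrow> nat"
    and X :: "real set" and I :: "nat \<Rightarrow> real set" and hmin hmax r0 :: real
  assumes "a < b"
    and "x 0 = a" and "x n = b"
    and "\<And>i. i < n \<Longrightarrow> x i < x (i + 1)"
    and "X = x ` {0..n}"
    and "\<And>l. l \<in> {1..m} \<Longrightarrow> 0 < \<alpha> l \<and> \<alpha> l < n - 1"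
    and "\<And>l. l \<in> {1..<m} \<Longrightarrow> \<alpha> l + 1 < \<alpha> (l + 1)"
    and "\<And>l. l \<in> {1..m} \<Longrightarrow> s l \<in> {x (\<alpha> l)<..<x (\<alpha> l + 1)}"
    and I_def: "I = (\<lambda>l. {Ileft x \<alpha> l .. Iright x \<alpha> n m l})"
    and hmin_def: "hmin = Min ((\<lambda>l. Iright x \<alpha> n m l - Ileft x \<alpha> l) ` {0..m})"
    and hmax_def: "hmax = Max {x (i + 1) - x i | i. i < n \<and>
                       (\<forall>l\<in>{1..m}. s l \<notin> {x i<..<x (i + 1)})}"
    and "hmin \<ge> hmax"
    and r0_def: "r0 = Inf {r. r > 0 \<and> r \<le> hmin \<and>
                   (\<forall>y\<in>(\<Union>l\<in>{0..m}. I l). \<exists>J. closed_interval_len J r \<and>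
                       J \<subseteq> (\<Union>l\<in>{0..m}. I l) \<and> y \<in> J \<and> card (J \<inter> X) \<ge> 1)}"
  shows "\<forall>l\<in>{0..m}. \<exists>(nl::nat) (U::nat \<Rightarrow> real set).
           (\<forall>j\<in>{1..nl}. closed_interval_len (U j) r0 \<and> card (U j \<inter> X) \<ge> 1) \<and>
           (\<forall>j\<in>{1..<nl}. U j \<inter> U (j + 1) \<noteq> {}) \<and>
           I l = (\<Union>j\<in>{1..nl}. U j)"
proof -
  define p q where "p = Ileft_index \<alpha>" and "q = Iright_index \<alpha> n m"
  have step: "\<And>i. i < n \<Longrightarrow> x i < x (Suc i)" using assms(4) by simp
  have "0 < n" using assms(1-3) by (cases n) auto
  have piece: "p l < q l \<and> q l \<le> n" if "l \<in> {0..m}" for l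
    unfolding p_def q_def using Ileft_index_less_Iright_index[of m \<alpha> n l] assms(6,7) \<open>0 < n\<close> that
    by simp
  have I_eq: "I = (\<lambda>l. {x (p l)..x (q l)})"
    by (simp add: I_def Ileft_eq Iright_eq p_def q_def)
  have cell_le_hmin: "x (Suc i) - x i \<le> hmin" if "l \<in> {0..m}" "p l \<le> i" "i < q l" for l i
  proof -
    have "i < n" using piece[OF that(1)] that(3) by simp
    have "\<forall>k\<in>{1..m}. s k \<notin> {x i<..<x (i + 1)}"
      using singularities_notin_piece_cells[of n x m \<alpha> s l i] step assms(6-8) that \<open>i < n\<close>
      by (simp add: p_def q_def)
    then have "x (i + 1) - x i \<le> hmax"
      unfolding hmax_def using \<open>i < n\<close> by (intro Max_ge) (auto simp: finite_image_set)
    then show ?thesis using assms(12) by simp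
  qed
  have hmin_le: "hmin \<le> x (q l) - x (p l)" if "l \<in> {0..m}" for l
    unfolding hmin_def using that by (intro Min_le) (auto simp: Ileft_eq Iright_eq p_def q_def)
  have "0 < hmin"
    unfolding hmin_def using piece grid_less[of n x] step
    by (subst Min_gr_iff) (auto simp: Ileft_eq Iright_eq p_def q_def)
  have r0_eq: "r0 = Inf (admissible_radii (\<Union>l\<in>{0..m}. {x (p l)..x (q l)}) X hmin)"
    by (simp add: r0_def I_eq admissible_radii_def)
  show ?thesis
    unfolding r0_eq I_eq
    by (intro ballI chain_cover_at_Inf_admissible_radii[OF step assms(5)])
      (use piece hmin_le cell_le_hmin \<open>0 < hmin\<close> in auto)
qed

end
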